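(* Let $f:\mathbb{R}^d\to\mathbb{R}$ be convex, twice continuously differentiable with $\nabla^2 f(x)\succ0$ for all $x$, and $L_{\text{semi}}$-semi-strongly self-concordant, and let $L_{\text{est}}\ge L_{\text{semi}}$. Then for every $x\in\mathbb{R}^d$, $$f\big(S_{f,L_{\text{est}}}(x)\big)\le\min_{y\in\mathbb{R}^d}\Big\{f(y)+\frac{L_{\text{est}}}{3}\|y-x\|_x^3\Big\}.$$
   Context: Local norms: $\|h\|_x=\langle\nabla^2 f(x)h,h\rangle^{1/2}$, $\|g\|_x^*=\langle g,[\nabla^2 f(x)]^{-1}g\rangle^{1/2}$; for a linear operator $H$ and base point $x$, $\|H\|_{op}=\sup_{v\neq0}\|Hv\|_x^*/\|v\|_x$. $f$ is $L_{\text{semi}}$-semi-strongly self-concordant if $\|\nabla^2 f(y)-\nabla^2 f(x)\|_{op}\le L_{\text{semi}}\|y-x\|_x$ for all $x,y$ (operator norm at base point $x$). $S_{f,L}(x)=x+\arg\min_{h}\{f(x)+\langle\nabla f(x),h\rangle+\frac12\langle\nabla^2f(x)h,h\rangle+\frac L6\|h\|_x^3\}$ (the minimizer exists and is unique since the objective is strictly convex and coercive). *)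

theory Defs
  imports "HOL-Analysis.Analysis"
begin

definition lnorm :: "(real^'n \<Rightarrow> real^'n^'n) \<Rightarrow> real^'n \<Rightarrow> real^'n \<Rightarrow> real" where
  "lnorm H x h = sqrt (h \<bullet> (H x *v h))"

definition dnorm :: "(real^'n \<Rightarrow> real^'n^'n) \<Rightarrow> real^'n \<Rightarrow> real^'n \<Rightarrow> real" where
  "dnorm H x g = sqrt (g \<bullet> (matrix_inv (H x) *v g))"

definition opnorm :: "(real^'n \<Rightarrow> real^'n^'n) \<Rightarrow> real^'n \<Rightarrow> real^'n^'n \<Rightarrow> real" where
  "opnorm H x A = Sup {dnorm H x (A *v v) / lnorm H x v | v. v \<noteq> 0}"

definition semi_strongly_sc :: "(real^'n \<Rightarrow> real^'n^'n) \<Rightarrow> real \<Rightarrow> bool" where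
  "semi_strongly_sc H L \<longleftrightarrow>
     (\<forall>x y. opnorm H x (H y - H x) \<le> L * lnorm H x (y - x))"

definition cubic_model ::
  "(real^'n \<Rightarrow> real) \<Rightarrow> (real^'n \<Rightarrow> real^'n) \<Rightarrow> (real^'n \<Rightarrow> real^'n^'n) \<Rightarrow> real \<Rightarrow> real^'n \<Rightarrow> real^'n \<Rightarrow> real" where
  "cubic_model f g H L x h =
     f x + g x \<bullet> h + (1/2) * (h \<bullet> (H x *v h)) + (L/6) * (lnorm H x h)^3"

definition cubic_step ::
  "(real^'n \<Rightarrow> real) \<Rightarrow> (real^'n \<Rightarrow> real^'n) \<Rightarrow> (real^'n \<Rightarrow> real^'n^'n) \<Rightarrow> real \<Rightarrow> real^'n \<Rightarrow> real^'n" where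
  "cubic_step f g H L x =
     x + (THE h. \<forall>h'. cubic_model f g H L x h \<le> cubic_model f g H L x h')"

end

theory Submission
  imports Defs
begin

text \<open>
  Along the segment from \<open>x\<close> to \<open>x + h\<close>, semi-strong self-concordance bounds the
  variation of the Hessian in the local operator norm by \<open>L t \<parallel>h\<parallel>\<^sub>x\<close>; integrating
  twice gives the cubic Taylor estimate
  \<open>\<bar>f (x + h) - f x - \<langle>\<nabla>f x, h\<rangle> - \<parallel>h\<parallel>\<^sub>x\<^sup>2 / 2\<bar> \<le> L/6 \<parallel>h\<parallel>\<^sub>x\<^sup>3\<close>.
  Hence \<open>f (x + h)\<close> lies below the cubic model at \<open>h\<close>, which in turn lies below
  \<open>f (x + h) + L/3 \<parallel>h\<parallel>\<^sub>x\<^sup>3\<close>; since \<open>S(x) - x\<close> minimises the model,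
  \<open>f (S x) \<le> model (S x - x) \<le> model (y - x) \<le> f y + L/3 \<parallel>y - x\<parallel>\<^sub>x\<^sup>3\<close>.
  Continuity of the Hessian makes it symmetric, so \<open>\<parallel>\<cdot>\<parallel>\<^sub>x\<close> is a norm; this is what
  makes the model strictly convex and coercive, hence \<open>S\<close> well defined.
\<close>

subsection \<open>Positive definite matrices\<close>

definition positive_definite :: "real^'n^'n \<Rightarrow> bool" where
  "positive_definite A \<longleftrightarrow> (\<forall>h. h \<noteq> 0 \<longrightarrow> 0 < h \<bullet> (A *v h))"

lemma positive_definite_nonneg:
  "positive_definite A \<Longrightarrow> 0 \<le> h \<bullet> (A *v h)"
  unfolding positive_definite_def by (cases "h = 0") auto

lemma quadratic_form_scaleR:
  fixes A :: "real^'n^'n"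
  shows "(t *\<^sub>R h) \<bullet> (A *v (t *\<^sub>R h)) = t\<^sup>2 * (h \<bullet> (A *v h))"
  by (simp add: matrix_vector_mult_scaleR power2_eq_square)

lemma quadratic_form_add:
  fixes A :: "real^'n^'n"
  shows "(u + v) \<bullet> (A *v (u + v)) = u \<bullet> (A *v u) + v \<bullet> (A *v v) + u \<bullet> (A *v v) + v \<bullet> (A *v u)"
  by (simp add: matrix_vector_right_distrib inner_add_left inner_add_right)

lemma quadratic_form_parallelogram:
  fixes A :: "real^'n^'n"
  shows "(u + v) \<bullet> (A *v (u + v)) + (u - v) \<bullet> (A *v (u - v))
           = 2 * (u \<bullet> (A *v u)) + 2 * (v \<bullet> (A *v v))"
  by (simp add: matrix_vector_right_distrib vec.diff inner_add_left inner_add_right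
      inner_diff_left inner_diff_right)

lemma transpose_eq_iff_inner_symmetric:
  fixes A :: "real^'n^'n"
  shows "transpose A = A \<longleftrightarrow> (\<forall>u v. u \<bullet> (A *v v) = v \<bullet> (A *v u))"
proof
  assume "transpose A = A"
  then show "\<forall>u v. u \<bullet> (A *v v) = v \<bullet> (A *v u)"
    by (metis dot_lmul_matrix inner_commute transpose_matrix_vector)
next
  assume sym: "\<forall>u v. u \<bullet> (A *v v) = v \<bullet> (A *v u)"
  have "A $ j $ i = A $ i $ j" for i j
    using sym[rule_format, of "axis i 1" "axis j 1"]
    by (simp add: matrix_vector_mult_basis inner_axis' column_def)
  then show "transpose A = A"
    by (simp add: vec_eq_iff transpose_def)
qed

lemma quadratic_form_Cauchy_Schwarz:
  fixes A :: "real^'n^'n"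
  assumes sym: "transpose A = A" and pd: "positive_definite A"
  shows "\<bar>u \<bullet> (A *v v)\<bar> \<le> sqrt (u \<bullet> (A *v u)) * sqrt (v \<bullet> (A *v v))"
proof (cases "v = 0")
  case False
  define b where "b = u \<bullet> (A *v v)"
  define a where "a = u \<bullet> (A *v u)"
  define c where "c = v \<bullet> (A *v v)"
  have c: "c > 0"
    using pd False by (simp add: c_def positive_definite_def)
  define t where "t = - b / c"
  have "0 \<le> (u + t *\<^sub>R v) \<bullet> (A *v (u + t *\<^sub>R v))"
    using pd by (rule positive_definite_nonneg)
  also have "\<dots> = a + t\<^sup>2 * c + 2 * t * b"
    unfolding quadratic_form_add quadratic_form_scaleR
    using sym[unfolded transpose_eq_iff_inner_symmetric]
    by (simp add: a_def b_def c_def matrix_vector_mult_scaleR)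
  also have "\<dots> = a - b\<^sup>2 / c"
    using c by (simp add: t_def field_simps power2_eq_square)
  finally have "b\<^sup>2 \<le> a * c"
    using c by (simp add: field_simps)
  then have "sqrt (b\<^sup>2) \<le> sqrt (a * c)"
    using real_sqrt_le_mono by blast
  then show ?thesis
    by (simp add: a_def b_def c_def real_sqrt_mult)
qed simp

lemma positive_definite_matrix_inv:
  fixes A :: "real^'n^'n"
  assumes "positive_definite A"
  shows "A *v (matrix_inv A *v w) = w"
proof -
  have "\<forall>x. A *v x = 0 \<longrightarrow> x = 0"
    using assms by (force simp: positive_definite_def)
  then have "invertible A"
    by (simp add: matrix_left_invertible_ker invertible_left_inverse)
  then have "A ** matrix_inv A = mat 1 \<and> matrix_inv A ** A = mat 1"
    unfolding invertible_def matrix_inv_def by (rule someI_ex)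
  then show ?thesis
    by (simp add: matrix_vector_mul_assoc)
qed

lemma quadratic_form_matrix_inv:
  fixes A :: "real^'n^'n"
  assumes "positive_definite A"
  shows "w \<bullet> (matrix_inv A *v w) = (matrix_inv A *v w) \<bullet> (A *v (matrix_inv A *v w))"
  using positive_definite_matrix_inv[OF assms] by (simp add: inner_commute)

lemma positive_definite_matrix_inv_nonneg:
  "positive_definite A \<Longrightarrow> 0 \<le> w \<bullet> (matrix_inv A *v w)"
  by (simp add: quadratic_form_matrix_inv positive_definite_nonneg)

lemma dual_Cauchy_Schwarz:
  fixes A :: "real^'n^'n"
  assumes sym: "transpose A = A" and pd: "positive_definite A"
  shows "\<bar>h \<bullet> w\<bar> \<le> sqrt (w \<bullet> (matrix_inv A *v w)) * sqrt (h \<bullet> (A *v h))"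
  using quadratic_form_Cauchy_Schwarz[OF sym pd, of h "matrix_inv A *v w"]
  by (simp add: positive_definite_matrix_inv[OF pd] quadratic_form_matrix_inv[OF pd] mult.commute)

lemma positive_definite_coercive:
  fixes A :: "real^'n^'n"
  assumes pd: "positive_definite A"
  obtains c where "c > 0" "\<And>v. c * (norm v)\<^sup>2 \<le> v \<bullet> (A *v v)"
proof -
  have "continuous_on (sphere 0 1) (\<lambda>v::real^'n. v \<bullet> (A *v v))"
    by (intro continuous_intros linear_continuous_on) (simp add: matrix_vector_mul_linear)
  moreover have "sphere (0::real^'n) 1 \<noteq> {}"
    by simp
  ultimately obtain v0 where v0: "v0 \<in> sphere 0 1"
    and min: "\<And>v. v \<in> sphere 0 1 \<Longrightarrow> v0 \<bullet> (A *v v0) \<le> v \<bullet> (A *v v)"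
    using continuous_attains_inf[OF compact_sphere] by blast
  have "v0 \<bullet> (A *v v0) > 0"
    using pd v0 unfolding positive_definite_def by (metis norm_zero one_neq_zero mem_sphere_0)
  moreover have "v0 \<bullet> (A *v v0) * (norm v)\<^sup>2 \<le> v \<bullet> (A *v v)" for v
  proof (cases "v = 0")
    case False
    then have "v0 \<bullet> (A *v v0) \<le> (inverse (norm v))\<^sup>2 * (v \<bullet> (A *v v))"
      using min[of "inverse (norm v) *\<^sub>R v"] unfolding quadratic_form_scaleR by simp
    then show ?thesis
      using False by (simp add: field_simps power2_eq_square)
  qed simp
  ultimately show ?thesis
    by (rule that)
qed

lemma quadratic_form_le_norm:
  fixes B :: "real^'n^'n"
  obtains C where "C > 0" "\<And>w. \<bar>w \<bullet> (B *v w)\<bar> \<le> C * (norm w)\<^sup>2"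
proof -
  obtain K where K: "K > 0" "\<And>w. norm (B *v w) \<le> norm w * K"
    using bounded_linear.pos_bounded[OF matrix_vector_mul_bounded_linear] by blast
  have "\<bar>w \<bullet> (B *v w)\<bar> \<le> K * (norm w)\<^sup>2" for w
  proof -
    have "\<bar>w \<bullet> (B *v w)\<bar> \<le> norm w * norm (B *v w)"
      by (rule Cauchy_Schwarz_ineq2)
    also have "\<dots> \<le> norm w * (norm w * K)"
      by (rule mult_left_mono[OF K(2)]) simp
    finally show ?thesis
      by (simp add: power2_eq_square mult_ac)
  qed
  with K(1) show ?thesis
    by (rule that)
qed

subsection \<open>Derivatives along lines and symmetry of the Hessian\<close>

lemma bounded_linear_matrix_vector_mult_left: "bounded_linear (\<lambda>A::real^'n^'m. A *v v)"
  unfolding linear_conv_bounded_linear[symmetric]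
  by (rule linearI) (auto simp: matrix_vector_mult_add_rdistrib scaleR_matrix_vector_assoc)

lemma has_real_derivative_along_line:
  fixes F :: "real^'n \<Rightarrow> real"
  assumes "\<And>y. (F has_derivative (\<lambda>k. G y \<bullet> k)) (at y)"
  shows "((\<lambda>t. F (p + t *\<^sub>R q)) has_real_derivative (G (p + t *\<^sub>R q) \<bullet> q)) (at t)"
proof -
  have "((\<lambda>t. p + t *\<^sub>R q) has_derivative (\<lambda>s. s *\<^sub>R q)) (at t)"
    by (auto intro!: derivative_eq_intros)
  from has_derivative_compose[OF this assms] show ?thesis
    unfolding has_field_derivative_def
    by (rule has_derivative_eq_rhs) (auto simp: fun_eq_iff mult.commute)
qed

lemma has_real_derivative_along_line_inner:
  fixes G :: "real^'n \<Rightarrow> real^'n"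
  assumes "\<And>y. (G has_derivative (\<lambda>k. H y *v k)) (at y)"
  shows "((\<lambda>t. G (p + t *\<^sub>R q) \<bullet> c) has_real_derivative ((H (p + t *\<^sub>R q) *v q) \<bullet> c)) (at t)"
proof -
  have "((\<lambda>t. p + t *\<^sub>R q) has_derivative (\<lambda>s. s *\<^sub>R q)) (at t)"
    by (auto intro!: derivative_eq_intros)
  from has_derivative_compose[OF this assms]
  have "((\<lambda>t. G (p + t *\<^sub>R q) \<bullet> c) has_derivative (\<lambda>s. (H (p + t *\<^sub>R q) *v (s *\<^sub>R q)) \<bullet> c)) (at t)"
    by (auto intro!: derivative_eq_intros)
  then show ?thesis
    unfolding has_field_derivative_def
    by (rule has_derivative_eq_rhs) (auto simp: fun_eq_iff mult.commute matrix_vector_mult_scaleR)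
qed

lemma second_difference_mvt:
  fixes f :: "real^'n \<Rightarrow> real" and g :: "real^'n \<Rightarrow> real^'n" and H :: "real^'n \<Rightarrow> real^'n^'n"
  assumes grad: "\<And>x. (f has_derivative (\<lambda>h. g x \<bullet> h)) (at x)"
    and hess: "\<And>x. (g has_derivative (\<lambda>h. H x *v h)) (at x)"
    and s: "s > 0"
  obtains \<xi> where "norm (\<xi> - x) \<le> s * (norm u + norm v)"
    "f (x + s *\<^sub>R u + s *\<^sub>R v) - f (x + s *\<^sub>R u) - f (x + s *\<^sub>R v) + f x = s\<^sup>2 * ((H \<xi> *v v) \<bullet> u)"
proof -
  define \<phi> where "\<phi> t = f (x + s *\<^sub>R v + t *\<^sub>R u) - f (x + t *\<^sub>R u)" for t
  have "(\<phi> has_real_derivative (g (x + s *\<^sub>R v + t *\<^sub>R u) \<bullet> u - g (x + t *\<^sub>R u) \<bullet> u)) (at t)" for t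
    unfolding \<phi>_def by (intro DERIV_diff has_real_derivative_along_line grad)
  from MVT2[OF s this] obtain \<tau> where \<tau>: "0 < \<tau>" "\<tau> < s"
    and \<phi>_mvt: "\<phi> s - \<phi> 0 = s * (g (x + \<tau> *\<^sub>R u + s *\<^sub>R v) \<bullet> u - g (x + \<tau> *\<^sub>R u) \<bullet> u)"
    by (auto simp: add_ac)
  have "((\<lambda>r. g (x + \<tau> *\<^sub>R u + r *\<^sub>R v) \<bullet> u) has_real_derivative (H (x + \<tau> *\<^sub>R u + r *\<^sub>R v) *v v) \<bullet> u) (at r)" for r
    by (rule has_real_derivative_along_line_inner[OF hess])
  from MVT2[OF s this] obtain \<sigma> where \<sigma>: "0 < \<sigma>" "\<sigma> < s"
    and g_mvt: "g (x + \<tau> *\<^sub>R u + s *\<^sub>R v) \<bullet> u - g (x + \<tau> *\<^sub>R u) \<bullet> u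
                  = s * ((H (x + \<tau> *\<^sub>R u + \<sigma> *\<^sub>R v) *v v) \<bullet> u)"
    by auto
  have "f (x + s *\<^sub>R u + s *\<^sub>R v) - f (x + s *\<^sub>R u) - f (x + s *\<^sub>R v) + f x = \<phi> s - \<phi> 0"
    by (simp add: \<phi>_def add_ac)
  also have "\<dots> = s\<^sup>2 * ((H (x + \<tau> *\<^sub>R u + \<sigma> *\<^sub>R v) *v v) \<bullet> u)"
    using \<phi>_mvt g_mvt by (simp add: power2_eq_square)
  finally have eq: "f (x + s *\<^sub>R u + s *\<^sub>R v) - f (x + s *\<^sub>R u) - f (x + s *\<^sub>R v) + f x
                    = s\<^sup>2 * ((H (x + \<tau> *\<^sub>R u + \<sigma> *\<^sub>R v) *v v) \<bullet> u)" .
  have "norm (\<tau> *\<^sub>R u + \<sigma> *\<^sub>R v) \<le> \<tau> * norm u + \<sigma> * norm v"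
    using \<tau> \<sigma> norm_triangle_ineq[of "\<tau> *\<^sub>R u" "\<sigma> *\<^sub>R v"] by simp
  also have "\<dots> \<le> s * (norm u + norm v)"
    using \<tau> \<sigma> by (simp add: distrib_left add_mono mult_right_mono)
  finally show ?thesis
    using eq by (intro that[of "x + \<tau> *\<^sub>R u + \<sigma> *\<^sub>R v"]) simp_all
qed

text \<open>The mixed second difference quotient at scale \<open>s\<close> equals the Hessian form at a point
  within \<open>s (\<parallel>u\<parallel> + \<parallel>v\<parallel>)\<close> of \<open>x\<close>; continuity of the Hessian identifies its limit.\<close>

lemma second_difference_quotient_tendsto:
  fixes f :: "real^'n \<Rightarrow> real" and g :: "real^'n \<Rightarrow> real^'n" and H :: "real^'n \<Rightarrow> real^'n^'n"
  assumes grad: "\<And>x. (f has_derivative (\<lambda>h. g x \<bullet> h)) (at x)"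
    and hess: "\<And>x. (g has_derivative (\<lambda>h. H x *v h)) (at x)"
    and cont: "continuous_on UNIV H"
  shows "((\<lambda>s. (f (x + s *\<^sub>R u + s *\<^sub>R v) - f (x + s *\<^sub>R u) - f (x + s *\<^sub>R v) + f x) / s\<^sup>2)
           \<longlongrightarrow> (H x *v v) \<bullet> u) (at_right 0)"
proof -
  define k where "k y = (H y *v v) \<bullet> u" for y
  define D where "D s = f (x + s *\<^sub>R u + s *\<^sub>R v) - f (x + s *\<^sub>R u) - f (x + s *\<^sub>R v) + f x" for s
  have "\<exists>\<xi>. norm (\<xi> - x) \<le> s * (norm u + norm v) \<and> D s = s\<^sup>2 * k \<xi>" if "0 < s" for s
  proof -
    obtain \<xi> where "norm (\<xi> - x) \<le> s * (norm u + norm v)" "D s = s\<^sup>2 * k \<xi>"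
      using second_difference_mvt[OF grad hess \<open>0 < s\<close>, of x u v] unfolding D_def k_def by blast
    then show ?thesis
      by blast
  qed
  then obtain \<xi> where \<xi>: "\<And>s. 0 < s \<Longrightarrow> norm (\<xi> s - x) \<le> s * (norm u + norm v)"
    and D: "\<And>s. 0 < s \<Longrightarrow> D s = s\<^sup>2 * k (\<xi> s)"
    by metis
  have "((\<lambda>s. \<xi> s - x) \<longlongrightarrow> 0) (at_right 0)"
  proof (rule Lim_null_comparison)
    show "\<forall>\<^sub>F s in at_right 0. norm (\<xi> s - x) \<le> s * (norm u + norm v)"
      by (rule eventually_mono[OF eventually_at_right_less]) (rule \<xi>)
    show "((\<lambda>s. s * (norm u + norm v)) \<longlongrightarrow> 0) (at_right (0::real))"
      by (auto intro!: tendsto_eq_intros)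
  qed
  then have "(\<xi> \<longlongrightarrow> x) (at_right 0)"
    by (simp add: Lim_null[symmetric])
  moreover have "isCont k x"
    using cont unfolding k_def continuous_on_eq_continuous_at[OF open_UNIV]
    by (auto intro!: continuous_intros bounded_linear.isCont[OF bounded_linear_matrix_vector_mult_left])
  ultimately have "((\<lambda>s. k (\<xi> s)) \<longlongrightarrow> k x) (at_right 0)"
    by (rule isCont_tendsto_compose[rotated])
  moreover have "\<forall>\<^sub>F s in at_right 0. k (\<xi> s) = D s / s\<^sup>2"
    by (rule eventually_mono[OF eventually_at_right_less]) (simp add: D)
  ultimately show ?thesis
    unfolding D_def k_def by (rule Lim_transform_eventually)
qed

lemma hessian_symmetric:
  fixes f :: "real^'n \<Rightarrow> real" and g :: "real^'n \<Rightarrow> real^'n" and H :: "real^'n \<Rightarrow> real^'n^'n"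
  assumes grad: "\<And>x. (f has_derivative (\<lambda>h. g x \<bullet> h)) (at x)"
    and hess: "\<And>x. (g has_derivative (\<lambda>h. H x *v h)) (at x)"
    and cont: "continuous_on UNIV H"
  shows "transpose (H x) = H x"
proof -
  have "(H x *v v) \<bullet> u = (H x *v u) \<bullet> v" for u v
  proof (rule tendsto_unique[OF trivial_limit_at_right_real])
    show "((\<lambda>s. (f (x + s *\<^sub>R u + s *\<^sub>R v) - f (x + s *\<^sub>R u) - f (x + s *\<^sub>R v) + f x) / s\<^sup>2)
            \<longlongrightarrow> (H x *v v) \<bullet> u) (at_right 0)"
      by (rule second_difference_quotient_tendsto[OF grad hess cont])
    show "((\<lambda>s. (f (x + s *\<^sub>R u + s *\<^sub>R v) - f (x + s *\<^sub>R u) - f (x + s *\<^sub>R v) + f x) / s\<^sup>2)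
            \<longlongrightarrow> (H x *v u) \<bullet> v) (at_right 0)"
      using second_difference_quotient_tendsto[OF grad hess cont, of x v u]
      by (simp add: algebra_simps)
  qed
  then show ?thesis
    by (simp add: transpose_eq_iff_inner_symmetric inner_commute)
qed

lemma abs_le_of_derivative_bound:
  fixes \<phi> \<phi>' :: "real \<Rightarrow> real"
  assumes zero: "\<phi> 0 = 0"
    and deriv: "\<And>s. (\<phi> has_real_derivative \<phi>' s) (at s)"
    and bound: "\<And>s. 0 \<le> s \<Longrightarrow> s \<le> t \<Longrightarrow> \<bar>\<phi>' s\<bar> \<le> c * s ^ n"
    and t: "0 \<le> t"
  shows "\<bar>\<phi> t\<bar> \<le> c * t ^ Suc n / Suc n"
proof -
  define P where "P s = c / Suc n * s ^ Suc n" for s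
  have P: "(P has_real_derivative c * s ^ n) (at s)" for s
  proof -
    have "((\<lambda>s. s ^ Suc n) has_real_derivative Suc n * s ^ n) (at s)"
      using DERIV_pow[of "Suc n" s] by simp
    from DERIV_cmult[OF this, of "c / Suc n"] show ?thesis
      by (simp add: P_def[abs_def] del: of_nat_Suc)
  qed
  have "(\<lambda>s. P s - \<phi> s) 0 \<le> (\<lambda>s. P s - \<phi> s) t"
    using DERIV_diff[OF P deriv] bound
    by (intro DERIV_nonneg_imp_nondecreasing[OF t]) (fastforce simp: abs_le_iff)
  moreover have "(\<lambda>s. P s + \<phi> s) 0 \<le> (\<lambda>s. P s + \<phi> s) t"
    using DERIV_add[OF P deriv] bound
    by (intro DERIV_nonneg_imp_nondecreasing[OF t]) (fastforce simp: abs_le_iff)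
  ultimately show ?thesis
    using zero by (simp add: P_def)
qed

lemma cube_midpoint_le:
  fixes a b :: real
  assumes "0 \<le> a" "0 \<le> b"
  shows "((a + b) / 2)^3 \<le> (a^3 + b^3) / 2"
proof -
  have "4 * (a^3 + b^3) - (a + b)^3 = 3 * (a + b) * (a - b)\<^sup>2"
    by (simp add: power2_eq_square power3_eq_cube algebra_simps)
  moreover have "0 \<le> 3 * (a + b) * (a - b)\<^sup>2"
    using assms by simp
  ultimately show ?thesis
    by (simp add: power_divide)
qed

lemma minimizer_unique_of_midpoint_strict:
  fixes m :: "'a::real_vector \<Rightarrow> real"
  assumes strict: "\<And>u v. u \<noteq> v \<Longrightarrow> m ((1/2) *\<^sub>R (u + v)) < (m u + m v) / 2"
    and min1: "\<And>h. m h1 \<le> m h" and min2: "\<And>h. m h2 \<le> m h"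
  shows "h1 = h2"
proof (rule ccontr)
  assume "h1 \<noteq> h2"
  then have "m ((1/2) *\<^sub>R (h1 + h2)) < (m h1 + m h2) / 2"
    by (rule strict)
  moreover have "m h1 \<le> m ((1/2) *\<^sub>R (h1 + h2))" "m h1 \<le> m h2" "m h2 \<le> m h1"
    using min1 min2 by blast+
  ultimately show False
    by simp
qed

subsection \<open>Local norms and the cubic model\<close>

lemma lnorm_scaleR: "lnorm H x (t *\<^sub>R h) = \<bar>t\<bar> * lnorm H x h"
  unfolding lnorm_def quadratic_form_scaleR by (simp add: real_sqrt_mult)

lemma dnorm_le_norm:
  obtains C where "C > 0" "\<And>w. dnorm H x w \<le> C * norm w"
proof -
  obtain C where C: "C > 0" "\<And>w. \<bar>w \<bullet> (matrix_inv (H x) *v w)\<bar> \<le> C * (norm w)\<^sup>2"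
    using quadratic_form_le_norm by blast
  have "dnorm H x w \<le> sqrt C * norm w" for w
  proof -
    have "dnorm H x w \<le> sqrt \<bar>w \<bullet> (matrix_inv (H x) *v w)\<bar>"
      unfolding dnorm_def by simp
    also have "\<dots> \<le> sqrt (C * (norm w)\<^sup>2)"
      using C(2) real_sqrt_le_mono by blast
    finally show ?thesis
      by (simp add: real_sqrt_mult)
  qed
  with C(1) show ?thesis
    by (intro that[of "sqrt C"]) simp_all
qed

locale local_norm =
  fixes H :: "real^'n \<Rightarrow> real^'n^'n" and x :: "real^'n"
  assumes symmetric: "transpose (H x) = H x"
    and pos_def: "positive_definite (H x)"
begin

lemma lnorm_nonneg: "0 \<le> lnorm H x h"
  by (simp add: lnorm_def positive_definite_nonneg[OF pos_def])

lemma lnorm_pos: "h \<noteq> 0 \<Longrightarrow> 0 < lnorm H x h"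
  using pos_def by (simp add: lnorm_def positive_definite_def)

lemma lnorm_square: "(lnorm H x h)\<^sup>2 = h \<bullet> (H x *v h)"
  by (simp add: lnorm_def positive_definite_nonneg[OF pos_def])

lemma lnorm_triangle: "lnorm H x (u + v) \<le> lnorm H x u + lnorm H x v"
proof -
  have "(lnorm H x (u + v))\<^sup>2 = (lnorm H x u)\<^sup>2 + (lnorm H x v)\<^sup>2 + 2 * (u \<bullet> (H x *v v))"
    using symmetric[unfolded transpose_eq_iff_inner_symmetric]
    by (simp add: lnorm_square quadratic_form_add)
  also have "\<dots> \<le> (lnorm H x u + lnorm H x v)\<^sup>2"
    using quadratic_form_Cauchy_Schwarz[OF symmetric pos_def, of u v]
    by (simp add: lnorm_def power2_eq_square algebra_simps)
  finally show ?thesis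
    using lnorm_nonneg by (meson add_nonneg_nonneg power2_le_imp_le)
qed

lemma lnorm_ge_norm:
  obtains c where "c > 0" "\<And>v. c * norm v \<le> lnorm H x v"
proof -
  obtain c where c: "c > 0" "\<And>v. c * (norm v)\<^sup>2 \<le> v \<bullet> (H x *v v)"
    using positive_definite_coercive[OF pos_def] by blast
  have "sqrt c * norm v \<le> lnorm H x v" for v
    using real_sqrt_le_mono[OF c(2)[of v]] by (simp add: lnorm_def real_sqrt_mult)
  with c(1) show ?thesis
    by (intro that[of "sqrt c"]) simp_all
qed

lemma dnorm_nonneg: "0 \<le> dnorm H x w"
  by (simp add: dnorm_def positive_definite_matrix_inv_nonneg[OF pos_def])

lemma opnorm_bdd_above: "bdd_above {dnorm H x (M *v v) / lnorm H x v | v. v \<noteq> 0}"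
proof -
  obtain c where c: "c > 0" "\<And>v. c * norm v \<le> lnorm H x v"
    using lnorm_ge_norm by blast
  obtain C where C: "C > 0" "\<And>w. dnorm H x w \<le> C * norm w"
    using dnorm_le_norm by blast
  obtain K where K: "K > 0" "\<And>v. norm (M *v v) \<le> norm v * K"
    using bounded_linear.pos_bounded[OF matrix_vector_mul_bounded_linear] by blast
  have "dnorm H x (M *v v) / lnorm H x v \<le> C * K / c" if "v \<noteq> 0" for v
  proof -
    have "dnorm H x (M *v v) \<le> C * norm (M *v v)"
      by (rule C(2))
    also have "\<dots> \<le> C * (norm v * K)"
      using C(1) K(2) by (simp add: mult_left_mono)
    finally have "dnorm H x (M *v v) \<le> C * K * norm v"
      by (simp add: mult_ac)
    then have "dnorm H x (M *v v) / lnorm H x v \<le> C * K * norm v / (c * norm v)"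
      using c C K that by (intro frac_le) (auto simp: dnorm_nonneg)
    with that show ?thesis
      by simp
  qed
  then show ?thesis
    unfolding bdd_above_def by blast
qed

lemma opnorm_quadratic_bound: "\<bar>h \<bullet> (M *v h)\<bar> \<le> opnorm H x M * (lnorm H x h)\<^sup>2"
proof (cases "h = 0")
  case False
  have "\<bar>h \<bullet> (M *v h)\<bar> \<le> dnorm H x (M *v h) * lnorm H x h"
    unfolding dnorm_def lnorm_def by (rule dual_Cauchy_Schwarz[OF symmetric pos_def])
  also have "\<dots> = (dnorm H x (M *v h) / lnorm H x h) * (lnorm H x h)\<^sup>2"
    using lnorm_pos[OF False] by (simp add: power2_eq_square)
  also have "\<dots> \<le> opnorm H x M * (lnorm H x h)\<^sup>2"
    unfolding opnorm_def
    by (intro mult_right_mono cSup_upper opnorm_bdd_above) (use False in auto)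
  finally show ?thesis .
qed (simp add: lnorm_def)

lemma semi_strongly_sc_nonneg:
  assumes "semi_strongly_sc H L"
  shows "0 \<le> L"
proof -
  obtain v :: "real^'n" where v: "v \<noteq> 0"
    using axis_eq_0_iff[of "undefined::'n" "1::real"] by force
  have "0 \<le> opnorm H x (H (x + v) - H x) * (lnorm H x v)\<^sup>2"
    using opnorm_quadratic_bound abs_ge_zero order_trans by blast
  then have "0 \<le> opnorm H x (H (x + v) - H x)"
    using lnorm_pos[OF v] by (simp add: zero_le_mult_iff)
  also have "\<dots> \<le> L * lnorm H x v"
    using assms unfolding semi_strongly_sc_def by (metis add_diff_cancel_left')
  finally show ?thesis
    using lnorm_pos[OF v] by (simp add: zero_le_mult_iff)
qed

lemma cubic_taylor_bound:
  fixes f :: "real^'n \<Rightarrow> real" and g :: "real^'n \<Rightarrow> real^'n"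
  assumes grad: "\<And>y. (f has_derivative (\<lambda>h. g y \<bullet> h)) (at y)"
    and hess: "\<And>y. (g has_derivative (\<lambda>h. H y *v h)) (at y)"
    and ssc: "semi_strongly_sc H L_semi" and L_ge: "L \<ge> L_semi"
  shows "\<bar>f (x + h) - f x - g x \<bullet> h - (1/2) * (h \<bullet> (H x *v h))\<bar> \<le> L / 6 * (lnorm H x h)^3"
proof -
  define q where "q = h \<bullet> (H x *v h)"
  define K where "K = L * (lnorm H x h)^3"
  define \<psi> where "\<psi> t = f (x + t *\<^sub>R h) - f x - t * (g x \<bullet> h) - t\<^sup>2 / 2 * q" for t
  define \<psi>' where "\<psi>' t = g (x + t *\<^sub>R h) \<bullet> h - g x \<bullet> h - t * q" for t
  define \<psi>'' where "\<psi>'' t = (H (x + t *\<^sub>R h) *v h) \<bullet> h - q" for t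
  have d1: "(\<psi> has_real_derivative \<psi>' t) (at t)" for t
    unfolding \<psi>_def[abs_def] \<psi>'_def
    by (rule derivative_eq_intros has_real_derivative_along_line[OF grad] refl | simp)+
  have d2: "(\<psi>' has_real_derivative \<psi>'' t) (at t)" for t
    unfolding \<psi>'_def[abs_def] \<psi>''_def
    by (rule derivative_eq_intros has_real_derivative_along_line_inner[OF hess] refl | simp)+
  have "\<bar>\<psi>'' t\<bar> \<le> K * t ^ 1" if t: "0 \<le> t" for t
  proof -
    have "\<psi>'' t = h \<bullet> ((H (x + t *\<^sub>R h) - H x) *v h)"
      by (simp add: \<psi>''_def q_def matrix_vector_mult_diff_rdistrib inner_diff_right inner_commute)
    then have "\<bar>\<psi>'' t\<bar> \<le> opnorm H x (H (x + t *\<^sub>R h) - H x) * (lnorm H x h)\<^sup>2"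
      using opnorm_quadratic_bound by simp
    also have "\<dots> \<le> L_semi * lnorm H x (t *\<^sub>R h) * (lnorm H x h)\<^sup>2"
      using ssc unfolding semi_strongly_sc_def by (intro mult_right_mono) (metis add_diff_cancel_left', simp)
    also have "\<dots> \<le> K * t ^ 1"
      using t L_ge lnorm_nonneg[of h]
      by (simp add: K_def lnorm_scaleR power2_eq_square power3_eq_cube mult_right_mono mult_ac)
    finally show ?thesis .
  qed
  then have "\<bar>\<psi>' t\<bar> \<le> K / 2 * t\<^sup>2" if "0 \<le> t" for t
    using abs_le_of_derivative_bound[OF _ d2, of t K 1] that by (simp add: \<psi>'_def power2_eq_square)
  then have "\<bar>\<psi> 1\<bar> \<le> K / 2 * 1 ^ 3 / 3"
    using abs_le_of_derivative_bound[OF _ d1, of 1 "K / 2" 2] by (simp add: \<psi>_def)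
  then show ?thesis
    by (simp add: \<psi>_def q_def K_def)
qed

lemma cubic_model_has_minimizer:
  assumes L: "L \<ge> 0"
  obtains h where "\<And>h'. cubic_model f g H L x h \<le> cubic_model f g H L x h'"
proof -
  define m where "m = cubic_model f g H L x"
  obtain c where c: "c > 0" "\<And>v. c * (norm v)\<^sup>2 \<le> v \<bullet> (H x *v v)"
    using positive_definite_coercive[OF pos_def] by blast
  define R where "R = 2 * norm (g x) / c"
  have R: "R \<ge> 0"
    using c by (simp add: R_def)
  have "continuous_on UNIV m"
    unfolding m_def cubic_model_def[abs_def] lnorm_def
    by (intro continuous_intros linear_continuous_on) (simp add: matrix_vector_mul_linear)
  moreover have "cball (0::real^'n) R \<noteq> {}"
    using R by simp
  ultimately obtain h0 where min0: "\<And>h. h \<in> cball 0 R \<Longrightarrow> m h0 \<le> m h"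
    using continuous_attains_inf[OF compact_cball _ continuous_on_subset[OF _ subset_UNIV]] by blast
  have far: "m 0 < m h" if h: "norm h > R" for h
  proof -
    have "2 * norm (g x) < c * norm h"
      using h c by (simp add: R_def field_simps)
    then have "2 * norm (g x) * norm h < c * norm h * norm h"
      using h R by (intro mult_strict_right_mono) auto
    then have "norm (g x) * norm h < c / 2 * (norm h)\<^sup>2"
      by (simp add: power2_eq_square)
    moreover have "- (norm (g x) * norm h) \<le> g x \<bullet> h"
      using Cauchy_Schwarz_ineq2[of "g x" h] by simp
    moreover have "0 \<le> (L/6) * (lnorm H x h)^3"
      using L lnorm_nonneg by simp
    ultimately show ?thesis
      using c(2)[of h] by (simp add: m_def cubic_model_def lnorm_def)
  qed
  have "m h0 \<le> m 0"
    using min0 R by simp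
  then have "m h0 \<le> m h" for h
    using min0[of h] far[of h] by (cases "norm h \<le> R") auto
  then show ?thesis
    unfolding m_def by (rule that)
qed

lemma cubic_model_midpoint_less:
  assumes L: "L \<ge> 0" and ne: "h1 \<noteq> h2"
  shows "cubic_model f g H L x ((1/2) *\<^sub>R (h1 + h2))
          < (cubic_model f g H L x h1 + cubic_model f g H L x h2) / 2"
proof -
  define q where "q h = h \<bullet> (H x *v h)" for h
  define l where "l h = lnorm H x h" for h
  define mid where "mid = (1/2) *\<^sub>R (h1 + h2)"
  have "q (h1 - h2) > 0"
    using pos_def ne by (simp add: q_def positive_definite_def)
  moreover have "q mid = q (h1 + h2) / 4"
    by (simp only: q_def mid_def quadratic_form_scaleR) (simp add: power2_eq_square)
  ultimately have q_mid: "q mid < (q h1 + q h2) / 2"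
    using quadratic_form_parallelogram[of h1 h2 "H x"] by (simp add: q_def)
  have "l mid \<le> (l h1 + l h2) / 2"
    using lnorm_triangle[of h1 h2] by (simp add: l_def mid_def lnorm_scaleR)
  then have "(l mid)^3 \<le> ((l h1 + l h2) / 2)^3"
    by (simp add: l_def lnorm_nonneg power_mono)
  also have "\<dots> \<le> ((l h1)^3 + (l h2)^3) / 2"
    by (rule cube_midpoint_le) (simp_all add: l_def lnorm_nonneg)
  finally have "L/6 * (l mid)^3 \<le> L/6 * (((l h1)^3 + (l h2)^3) / 2)"
    by (rule mult_left_mono) (use L in simp)
  moreover have "g x \<bullet> mid = (g x \<bullet> h1 + g x \<bullet> h2) / 2"
    by (simp add: mid_def inner_add_right)
  ultimately show ?thesis
    using q_mid by (simp add: cubic_model_def q_def l_def mid_def[symmetric] field_simps)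
qed

lemma cubic_step_minimizes:
  assumes L: "L \<ge> 0"
  shows "cubic_model f g H L x (cubic_step f g H L x - x) \<le> cubic_model f g H L x h"
proof -
  define m where "m = cubic_model f g H L x"
  have "\<exists>!h. \<forall>h'. m h \<le> m h'"
  proof (rule ex_ex1I)
    show "\<exists>h. \<forall>h'. m h \<le> m h'"
      using cubic_model_has_minimizer[OF L] unfolding m_def by metis
    show "h1 = h2" if "\<forall>h'. m h1 \<le> m h'" "\<forall>h'. m h2 \<le> m h'" for h1 h2
      using cubic_model_midpoint_less[OF L] that unfolding m_def
      by (blast intro: minimizer_unique_of_midpoint_strict)
  qed
  then have "\<forall>h'. m (THE h. \<forall>h'. m h \<le> m h') \<le> m h'"
    by (rule theI')
  then show ?thesis
    by (simp add: cubic_step_def m_def)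
qed

end

theorem lemma5:
  fixes f :: "real^'n \<Rightarrow> real"
    and g :: "real^'n \<Rightarrow> real^'n"
    and H :: "real^'n \<Rightarrow> real^'n^'n"
    and L_semi L_est :: real
  assumes convex: "convex_on UNIV f"
    and grad: "\<And>x. (f has_derivative (\<lambda>h. g x \<bullet> h)) (at x)"
    and hess: "\<And>x. (g has_derivative (\<lambda>h. H x *v h)) (at x)"
    and hess_cont: "continuous_on UNIV H"
    and pos_def: "\<And>x h. h \<noteq> 0 \<Longrightarrow> h \<bullet> (H x *v h) > 0"
    and ssc: "semi_strongly_sc H L_semi"
    and L_ge: "L_est \<ge> L_semi"
  shows "\<forall>x y. f (cubic_step f g H L_est x) \<le> f y + (L_est / 3) * (lnorm H x (y - x))^3"
proof (intro allI)
  fix x y :: "real^'n"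
  interpret local_norm H x
  proof
    show "transpose (H x) = H x"
      by (rule hessian_symmetric[OF grad hess hess_cont])
    show "positive_definite (H x)"
      using pos_def by (simp add: positive_definite_def)
  qed
  have L: "L_est \<ge> 0"
    using semi_strongly_sc_nonneg[OF ssc] L_ge by linarith
  define m where "m = cubic_model f g H L_est x"
  have below: "f (x + k) \<le> m k" and above: "m k \<le> f (x + k) + (L_est / 3) * (lnorm H x k)^3" for k
    using cubic_taylor_bound[OF grad hess ssc L_ge, of k]
    unfolding m_def cubic_model_def abs_le_iff by linarith+
  have "f (cubic_step f g H L_est x) \<le> m (cubic_step f g H L_est x - x)"
    using below[of "cubic_step f g H L_est x - x"] by simp
  also have "\<dots> \<le> m (y - x)"
    unfolding m_def by (rule cubic_step_minimizes[OF L])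
  also have "\<dots> \<le> f y + (L_est / 3) * (lnorm H x (y - x))^3"
    using above[of "y - x"] by simp
  finally show "f (cubic_step f g H L_est x) \<le> f y + (L_est / 3) * (lnorm H x (y - x))^3" .
qed

end
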